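(* Let $S$ be an inverse semigroup. The following are equivalent: (1) $S$ is quasi-finitely generated; (2) $S$ admits a uniformly proper, right-subinvariant, uniformly discrete extended metric whose components are the $\mathcal L$-classes.
   Context: An inverse semigroup is a semigroup $S$ in which every $s$ has a unique $s^{-1}$ with $ss^{-1}s=s$, $s^{-1}ss^{-1}=s^{-1}$; $E(S)$ denotes its idempotents. Green's relation $\mathcal L$: $(s,t)\in\mathcal L$ iff $s^{-1}s=t^{-1}t$. $S$ is quasi-finitely generated if there is a finite subset $\mathcal M=\mathcal M^{-1}$ with $S$ generated as a semigroup by $\mathcal M\cup E(S)$. An extended metric $d$ on $S$ (distances may be $\infty$) has components the $\mathcal L$-classes if $d(s,t)<\infty$ iff $(s,t)\in\mathcal L$. It is uniformly discrete if $\inf_{s\ne t}d(s,t)>0$; right-subinvariant if $d(sx,tx)\le d(s,t)$ for all $s,t,x\in S$; uniformly proper if there is a finite $F_1\subseteq S$ such that for every $r\ge0$ and all $x\ne y$ in $S$ with $d(x,y)\le r$ there is $f$, a product of at most $\lceil r\rceil$ elements of $F_1$, with $y=fx$. *)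

theory Defs
  imports Main "HOL-Library.Extended_Nonnegative_Real"
begin

class inverse_semigroup = semigroup_mult +
  assumes unique_inverse: "\<forall>s. \<exists>!t. s * t * s = s \<and> t * s * t = t"

definition isinv :: "'a::inverse_semigroup \<Rightarrow> 'a" where
  "isinv s = (THE t. s * t * s = s \<and> t * s * t = t)"

definition idems :: "'a::inverse_semigroup set" where
  "idems = {e. e * e = e}"

definition Lrel :: "'a::inverse_semigroup \<Rightarrow> 'a \<Rightarrow> bool" where
  "Lrel s t \<longleftrightarrow> isinv s * s = isinv t * t"

fun lprod :: "'a::semigroup_mult list \<Rightarrow> 'a" where
  "lprod [x] = x"
| "lprod (x # y # xs) = x * lprod (y # xs)"
| "lprod [] = undefined"

definition quasi_finitely_generated :: "'a::inverse_semigroup itself \<Rightarrow> bool" where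
  "quasi_finitely_generated _ \<longleftrightarrow>
     (\<exists>M::'a set. finite M \<and> isinv ` M = M \<and>
        (\<forall>s::'a. \<exists>ws. ws \<noteq> [] \<and> set ws \<subseteq> M \<union> idems \<and> s = lprod ws))"

definition ext_metric :: "('a \<Rightarrow> 'a \<Rightarrow> ennreal) \<Rightarrow> bool" where
  "ext_metric d \<longleftrightarrow>
     (\<forall>x y. d x y = 0 \<longleftrightarrow> x = y) \<and> (\<forall>x y. d x y = d y x) \<and>
     (\<forall>x y z. d x z \<le> d x y + d y z)"

definition components_L_classes :: "('a::inverse_semigroup \<Rightarrow> 'a \<Rightarrow> ennreal) \<Rightarrow> bool" where
  "components_L_classes d \<longleftrightarrow> (\<forall>s t. d s t < \<infinity> \<longleftrightarrow> Lrel s t)"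

definition uniformly_discrete :: "('a \<Rightarrow> 'a \<Rightarrow> ennreal) \<Rightarrow> bool" where
  "uniformly_discrete d \<longleftrightarrow> (INF p \<in> {(s, t). s \<noteq> t}. d (fst p) (snd p)) > 0"

definition right_subinvariant :: "('a::semigroup_mult \<Rightarrow> 'a \<Rightarrow> ennreal) \<Rightarrow> bool" where
  "right_subinvariant d \<longleftrightarrow> (\<forall>s t x. d (s * x) (t * x) \<le> d s t)"

definition uniformly_proper :: "('a::semigroup_mult \<Rightarrow> 'a \<Rightarrow> ennreal) \<Rightarrow> bool" where
  "uniformly_proper d \<longleftrightarrow>
     (\<exists>F1. finite F1 \<and>
        (\<forall>r::real. r \<ge> 0 \<longrightarrow> (\<forall>x y. x \<noteq> y \<and> d x y \<le> ennreal r \<longrightarrow>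
           (\<exists>fs. fs \<noteq> [] \<and> length fs \<le> nat \<lceil>r\<rceil> \<and> set fs \<subseteq> F1 \<and> y = lprod fs * x))))"

end

theory Submission
  imports Defs
begin

text \<open>For a finite set M = isinv ` M which together with the idempotents generates S, let the
  distance of L-related s and t be the length of a shortest word w over M with t = w s. Such words
  exist: t = (t isinv s) s, and in a word for t isinv s over M and the idempotents every suffix
  applied to s stays in the L-class of s, where an idempotent letter acts trivially and can be
  deleted. Reading a word backwards with inverted letters carries t back to s, which gives
  symmetry; right multiplication preserves L and transports words, which gives
  right-subinvariance. Conversely, if the metric is uniformly proper with finite set F1, every
  non-idempotent s is at finite distance from isinv s * s, hence equals a product over F1 times
  that idempotent, so F1 together with its inverses generates S with the idempotents.\<close>

lemma isinv_ex1: "\<exists>!t. (s::'a::inverse_semigroup) * t * s = s \<and> t * s * t = t"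
  using unique_inverse by blast

lemma mult_isinv_mult: "(s::'a::inverse_semigroup) * isinv s * s = s"
  and isinv_mult_isinv: "isinv (s::'a::inverse_semigroup) * s * isinv s = isinv s"
  using theI'[OF isinv_ex1[of s]] unfolding isinv_def by blast+

lemma isinv_eqI: "(s::'a::inverse_semigroup) * t * s = s \<Longrightarrow> t * s * t = t \<Longrightarrow> isinv s = t"
  unfolding isinv_def by (rule the1_equality[OF isinv_ex1]) simp

lemma isinv_isinv [simp]: "isinv (isinv s) = (s::'a::inverse_semigroup)"
  by (rule isinv_eqI) (simp_all add: mult_isinv_mult isinv_mult_isinv)

lemma isinv_idem: "(e::'a::inverse_semigroup) * e = e \<Longrightarrow> isinv e = e"
  by (rule isinv_eqI) simp_all

lemma isinv_mult_self_idem: "isinv (s::'a::inverse_semigroup) * s * (isinv s * s) = isinv s * s"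
  and mult_isinv_self_idem: "(s::'a::inverse_semigroup) * isinv s * (s * isinv s) = s * isinv s"
  by (metis mult_isinv_mult isinv_mult_isinv mult.assoc)+

text \<open>The inverse x of ef is again an inverse of ef in the form f x e, which makes x idempotent;
  an idempotent is its own inverse, so ef = x.\<close>
lemma idem_mult_idem:
  fixes e f :: "'a::inverse_semigroup"
  assumes e: "e * e = e" and f: "f * f = f"
  shows "e * f * (e * f) = e * f"
proof -
  define x where "x = isinv (e * f)"
  have "isinv (e * f) = f * x * e"
  proof (rule isinv_eqI)
    have "e * f * (f * x * e) * (e * f) = e * (f * f) * x * (e * e) * f"
      by (simp add: mult.assoc)
    also have "\<dots> = e * f * x * (e * f)"
      by (simp only: e f mult.assoc)
    finally show "e * f * (f * x * e) * (e * f) = e * f"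
      by (simp only: x_def mult_isinv_mult)
    have "f * x * e * (e * f) * (f * x * e) = f * (x * (e * e) * (f * f) * x) * e"
      by (simp add: mult.assoc)
    also have "\<dots> = f * (x * (e * f) * x) * e"
      by (simp only: e f mult.assoc)
    finally show "f * x * e * (e * f) * (f * x * e) = f * x * e"
      by (simp only: x_def isinv_mult_isinv)
  qed
  then have x_eq: "f * x * e = x"
    by (simp add: x_def)
  have "x * x = f * (x * (e * f) * x) * e"
    by (metis x_eq mult.assoc)
  also have "\<dots> = x"
    by (simp only: x_def isinv_mult_isinv x_eq[unfolded x_def])
  finally have "x * x = x" .
  moreover have "e * f = isinv x"
    by (simp add: x_def)
  ultimately show ?thesis
    using isinv_idem by metis
qed

lemma idem_commute:
  fixes e f :: "'a::inverse_semigroup"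
  assumes e: "e * e = e" and f: "f * f = f"
  shows "e * f = f * e"
proof -
  have ef: "e * f * (e * f) = e * f" and fe: "f * e * (f * e) = f * e"
    using idem_mult_idem e f by blast+
  have "isinv (e * f) = f * e"
  proof (rule isinv_eqI)
    show "e * f * (f * e) * (e * f) = e * f"
      using e f ef by (metis mult.assoc)
    show "f * e * (e * f) * (f * e) = f * e"
      using e f fe by (metis mult.assoc)
  qed
  with isinv_idem[OF ef] show ?thesis
    by simp
qed

lemma isinv_mult: "isinv (x * y :: 'a::inverse_semigroup) = isinv y * isinv x"
proof (rule isinv_eqI)
  have comm: "y * isinv y * (isinv x * x) = isinv x * x * (y * isinv y)"
    by (rule idem_commute[OF mult_isinv_self_idem isinv_mult_self_idem])
  have "x * y * (isinv y * isinv x) * (x * y) = x * (y * isinv y * (isinv x * x)) * y"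
    by (simp add: mult.assoc)
  also have "\<dots> = (x * isinv x * x) * (y * isinv y * y)"
    unfolding comm by (simp add: mult.assoc)
  finally show "x * y * (isinv y * isinv x) * (x * y) = x * y"
    by (simp add: mult_isinv_mult)
  have "isinv y * isinv x * (x * y) * (isinv y * isinv x)
      = isinv y * (isinv x * x * (y * isinv y)) * isinv x"
    by (simp add: mult.assoc)
  also have "\<dots> = (isinv y * y * isinv y) * (isinv x * x * isinv x)"
    unfolding comm[symmetric] by (simp add: mult.assoc)
  finally show "isinv y * isinv x * (x * y) * (isinv y * isinv x) = isinv y * isinv x"
    by (simp add: isinv_mult_isinv)
qed

lemma Lrel_refl: "Lrel s s"
  and Lrel_sym: "Lrel s t \<Longrightarrow> Lrel t s"
  and Lrel_trans: "Lrel s t \<Longrightarrow> Lrel t u \<Longrightarrow> Lrel s u"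
  by (simp_all add: Lrel_def)

lemma Lrel_mult_right: "Lrel s t \<Longrightarrow> Lrel (s * x) (t * x :: 'a::inverse_semigroup)"
  unfolding Lrel_def by (simp add: isinv_mult mult.assoc[symmetric]) (simp add: mult.assoc)

lemma Lrel_isinv_mult_self: "Lrel (isinv s * s) (s::'a::inverse_semigroup)"
  unfolding Lrel_def by (simp add: isinv_mult isinv_mult_self_idem)

lemma isinv_mult_cancel_left_if_Lrel:
  fixes a y :: "'a::inverse_semigroup"
  assumes "Lrel y (a * y)"
  shows "isinv a * (a * y) = y"
proof -
  have L: "isinv y * y = isinv y * isinv a * (a * y)"
    using assms unfolding Lrel_def by (simp add: isinv_mult mult.assoc)
  have "y = y * (isinv y * y)"
    by (metis mult_isinv_mult mult.assoc)
  also have "\<dots> = (y * isinv y) * (isinv a * a) * y"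
    using L by (simp add: mult.assoc)
  also have "\<dots> = (isinv a * a) * (y * isinv y) * y"
    by (simp only: idem_commute[OF mult_isinv_self_idem isinv_mult_self_idem])
  also have "\<dots> = isinv a * (a * y)"
    by (metis mult_isinv_mult mult.assoc)
  finally show ?thesis ..
qed

lemma Lrel_of_Lrel_mult_left:
  fixes a x s :: "'a::inverse_semigroup"
  assumes x: "x * (isinv s * s) = x" and L: "Lrel s (a * x)"
  shows "Lrel s x"
proof -
  have L': "isinv s * s = isinv x * isinv a * (a * x)"
    using L unfolding Lrel_def by (simp add: isinv_mult mult.assoc)
  have "isinv x * x = isinv x * (x * (isinv s * s))"
    using x by simp
  also have "\<dots> = (isinv x * x * isinv x) * isinv a * (a * x)"
    using L' by (simp add: mult.assoc)
  also have "\<dots> = isinv s * s"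
    using L' by (simp add: isinv_mult_isinv)
  finally show ?thesis
    unfolding Lrel_def by simp
qed

lemma foldr_mult_right: "foldr (*) ws s * x = foldr (*) ws (s * x :: 'a::semigroup_mult)"
  by (induction ws) (simp_all add: mult.assoc)

lemma lprod_mult_eq_foldr: "ws \<noteq> [] \<Longrightarrow> lprod ws * s = foldr (*) ws (s::'a::semigroup_mult)"
  by (induction ws rule: lprod.induct) (simp_all add: mult.assoc)

lemma lprod_append_singleton: "ws \<noteq> [] \<Longrightarrow> lprod (ws @ [e]) = lprod ws * (e::'a::semigroup_mult)"
  by (induction ws rule: lprod.induct) (simp_all add: mult.assoc)

lemma Lrel_foldr_Cons_tail:
  fixes s :: "'a::inverse_semigroup"
  assumes "Lrel s (foldr (*) (a # ws) s)"
  shows "Lrel s (foldr (*) ws s)"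
proof (rule Lrel_of_Lrel_mult_left)
  show "foldr (*) ws s * (isinv s * s) = foldr (*) ws s"
    by (simp add: foldr_mult_right mult.assoc[symmetric] mult_isinv_mult)
  show "Lrel s (a * foldr (*) ws s)"
    using assms by simp
qed

lemma foldr_filter_idem_letters:
  fixes s :: "'a::inverse_semigroup"
  assumes "Lrel s (foldr (*) ws s)" and "\<forall>a \<in> set ws. \<not> P a \<longrightarrow> a \<in> idems"
  shows "foldr (*) (filter P ws) s = foldr (*) ws s"
  using assms
proof (induction ws)
  case Nil
  then show ?case by simp
next
  case (Cons a ws)
  define x where "x = foldr (*) ws s"
  have Lx: "Lrel s x"
    using Lrel_foldr_Cons_tail Cons.prems(1) by (simp add: x_def)
  have IH: "foldr (*) (filter P ws) s = x"
    using Cons Lx by (simp add: x_def)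
  show ?case
  proof (cases "P a")
    case True
    with IH show ?thesis by (simp add: x_def)
  next
    case False
    then have aa: "a * a = a"
      using Cons.prems(2) by (simp add: idems_def)
    have "Lrel x (a * x)"
      using Lx Cons.prems(1) by (simp add: Lrel_def x_def)
    then have "x = a * (a * x)"
      using isinv_mult_cancel_left_if_Lrel isinv_idem[OF aa] by metis
    then have "a * x = x"
      using aa by (metis mult.assoc)
    with False IH show ?thesis by (simp add: x_def)
  qed
qed

lemma foldr_rev_map_isinv:
  fixes s :: "'a::inverse_semigroup"
  shows "Lrel s (foldr (*) ws s) \<Longrightarrow> foldr (*) (rev (map isinv ws)) (foldr (*) ws s) = s"
proof (induction ws)
  case Nil
  then show ?case by simp
next
  case (Cons a ws)
  define x where "x = foldr (*) ws s"
  have Lx: "Lrel s x"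
    using Lrel_foldr_Cons_tail Cons.prems by (simp add: x_def)
  have "Lrel x (a * x)"
    using Lx Cons.prems by (simp add: Lrel_def x_def)
  then have "isinv a * (a * x) = x"
    by (rule isinv_mult_cancel_left_if_Lrel)
  with Cons.IH Lx show ?case
    by (simp add: x_def)
qed

definition quasi_generates :: "'a::inverse_semigroup set \<Rightarrow> bool" where
  "quasi_generates M \<longleftrightarrow> (\<forall>s. \<exists>ws. ws \<noteq> [] \<and> set ws \<subseteq> M \<union> idems \<and> s = lprod ws)"

lemma quasi_finitely_generated_iff:
  "quasi_finitely_generated TYPE('a::inverse_semigroup) \<longleftrightarrow>
    (\<exists>M::'a set. finite M \<and> isinv ` M = M \<and> quasi_generates M)"
  unfolding quasi_finitely_generated_def quasi_generates_def ..

lemma Lrel_imp_word: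
  fixes s t :: "'a::inverse_semigroup"
  assumes "quasi_generates M" and L: "Lrel s t"
  shows "\<exists>ws. set ws \<subseteq> M \<and> t = foldr (*) ws s"
proof -
  have "t = t * (isinv t * t)"
    by (metis mult_isinv_mult mult.assoc)
  also have "\<dots> = (t * isinv s) * s"
    using L by (simp add: Lrel_def mult.assoc)
  finally have t: "t = (t * isinv s) * s" .
  obtain gs where gs: "gs \<noteq> []" "set gs \<subseteq> M \<union> idems" "t * isinv s = lprod gs"
    using assms(1) unfolding quasi_generates_def by metis
  have t_foldr: "t = foldr (*) gs s"
    using t gs lprod_mult_eq_foldr by metis
  have "foldr (*) (filter (\<lambda>a. a \<in> M) gs) s = t"
    using foldr_filter_idem_letters[of s gs "\<lambda>a. a \<in> M"] t_foldr L gs(2) by auto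
  then show ?thesis
    by (intro exI[of _ "filter (\<lambda>a. a \<in> M) gs"]) auto
qed

definition word_path :: "'a::semigroup_mult set \<Rightarrow> nat \<Rightarrow> 'a \<Rightarrow> 'a \<Rightarrow> bool" where
  "word_path M n s t \<longleftrightarrow> (\<exists>ws. length ws = n \<and> set ws \<subseteq> M \<and> t = foldr (*) ws s)"

text \<open>The guard Lrel is essential: a left translate of s by a letter may leave the L-class of s,
  and such steps must not count as paths.\<close>
definition word_dist :: "'a::inverse_semigroup set \<Rightarrow> 'a \<Rightarrow> 'a \<Rightarrow> ennreal" where
  "word_dist M s t = (if Lrel s t then of_nat (LEAST n. word_path M n s t) else \<infinity>)"

lemma word_path_0_iff: "word_path M 0 s t \<longleftrightarrow> s = t"
  unfolding word_path_def by auto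

lemma word_path_trans:
  "word_path M m s t \<Longrightarrow> word_path M n t u \<Longrightarrow> word_path M (m + n) s u"
  unfolding word_path_def by (metis foldr_append le_sup_iff length_append add.commute set_append)

lemma word_path_mult_right: "word_path M n s t \<Longrightarrow> word_path M n (s * x) (t * x)"
  unfolding word_path_def by (metis foldr_mult_right)

lemma word_path_sym:
  fixes s t :: "'a::inverse_semigroup"
  assumes "isinv ` M \<subseteq> M" and "Lrel s t" and "word_path M n s t"
  shows "word_path M n t s"
proof -
  obtain ws where ws: "length ws = n" "set ws \<subseteq> M" "t = foldr (*) ws s"
    using assms(3) unfolding word_path_def by blast
  have "foldr (*) (rev (map isinv ws)) t = s"
    using foldr_rev_map_isinv assms(2) ws(3) by metis
  moreover have "set (rev (map isinv ws)) \<subseteq> M"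
    using ws(2) assms(1) by auto
  ultimately show ?thesis
    unfolding word_path_def using ws(1) by (metis length_map length_rev)
qed

lemma word_dist_less_top_iff: "word_dist M s t < \<infinity> \<longleftrightarrow> Lrel s t"
  unfolding word_dist_def by (simp add: of_nat_less_top)

context
  fixes M :: "'a::inverse_semigroup set"
  assumes gen: "quasi_generates M"
begin

lemma word_path_Least:
  assumes "Lrel s t"
  shows "word_path M (LEAST n. word_path M n s t) s t"
proof (rule LeastI_ex)
  show "\<exists>n. word_path M n s t"
    using Lrel_imp_word[OF gen assms] unfolding word_path_def by blast
qed

lemma word_dist_eq_0_iff: "word_dist M s t = 0 \<longleftrightarrow> s = t"
proof
  assume d: "word_dist M s t = 0"
  then have L: "Lrel s t"
    unfolding word_dist_def by (auto split: if_splits)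
  with d have "(LEAST n. word_path M n s t) = 0"
    unfolding word_dist_def by simp
  with word_path_Least[OF L] show "s = t"
    by (simp add: word_path_0_iff)
next
  assume "s = t"
  then show "word_dist M s t = 0"
    unfolding word_dist_def by (simp add: Lrel_refl word_path_0_iff)
qed

lemma word_dist_ge_1: "s \<noteq> t \<Longrightarrow> 1 \<le> word_dist M s t"
  using word_dist_eq_0_iff[of s t] unfolding word_dist_def
  by (auto split: if_splits simp: Suc_le_eq)

lemma word_dist_triangle: "word_dist M s u \<le> word_dist M s t + word_dist M t u"
proof (cases "Lrel s t \<and> Lrel t u")
  case True
  then have "word_path M ((LEAST n. word_path M n s t) + (LEAST n. word_path M n t u)) s u"
    using word_path_trans word_path_Least by blast
  then have "(LEAST n. word_path M n s u) \<le> (LEAST n. word_path M n s t) + (LEAST n. word_path M n t u)"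
    by (rule Least_le)
  with True show ?thesis
    unfolding word_dist_def using Lrel_trans by (auto simp flip: of_nat_add)
next
  case False
  then show ?thesis
    unfolding word_dist_def by auto
qed

lemma word_dist_mult_right_le: "word_dist M (s * x) (t * x) \<le> word_dist M s t"
proof (cases "Lrel s t")
  case True
  then have "word_path M (LEAST n. word_path M n s t) (s * x) (t * x)"
    using word_path_mult_right word_path_Least by blast
  then have "(LEAST n. word_path M n (s * x) (t * x)) \<le> (LEAST n. word_path M n s t)"
    by (rule Least_le)
  with True show ?thesis
    unfolding word_dist_def using Lrel_mult_right by auto
next
  case False
  then show ?thesis
    unfolding word_dist_def by simp
qed

lemma word_dist_sym:
  assumes "isinv ` M = M"
  shows "word_dist M s t = word_dist M t s"
proof (cases "Lrel s t")
  case True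
  then have "word_path M n s t \<longleftrightarrow> word_path M n t s" for n
    using word_path_sym assms Lrel_sym by blast
  with True show ?thesis
    unfolding word_dist_def using Lrel_sym by simp
next
  case False
  then have "\<not> Lrel t s"
    using Lrel_sym by blast
  with False show ?thesis
    unfolding word_dist_def by simp
qed

lemma word_dist_le_imp_word:
  assumes "0 \<le> r" and "s \<noteq> t" and "word_dist M s t \<le> ennreal r"
  shows "\<exists>ws. ws \<noteq> [] \<and> length ws \<le> nat \<lceil>r\<rceil> \<and> set ws \<subseteq> M \<and> t = lprod ws * s"
proof -
  have "word_dist M s t < \<infinity>"
    using le_less_trans[OF assms(3) ennreal_less_top[of r]] by simp
  then have L: "Lrel s t"
    using word_dist_less_top_iff by blast
  obtain ws where ws: "length ws = (LEAST n. word_path M n s t)" "set ws \<subseteq> M" "t = foldr (*) ws s"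
    using word_path_Least[OF L] unfolding word_path_def by blast
  have "of_nat (length ws) \<le> ennreal r"
    using assms(3) L ws(1) unfolding word_dist_def by simp
  then have "length ws \<le> nat \<lceil>r\<rceil>"
    using assms(1) by simp linarith
  moreover have "ws \<noteq> []"
    using ws(3) assms(2) by auto
  moreover from this have "t = lprod ws * s"
    by (simp add: ws(3) lprod_mult_eq_foldr)
  ultimately show ?thesis
    using ws(2) by blast
qed

lemma ext_metric_word_dist:
  assumes "isinv ` M = M"
  shows "ext_metric (word_dist M)"
  unfolding ext_metric_def
  by (intro conjI allI word_dist_eq_0_iff word_dist_sym[OF assms] word_dist_triangle)

lemma uniformly_proper_word_dist:
  assumes "finite M"
  shows "uniformly_proper (word_dist M)"
  unfolding uniformly_proper_def
  by (intro exI[of _ M] conjI assms allI impI word_dist_le_imp_word) auto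

lemma right_subinvariant_word_dist: "right_subinvariant (word_dist M)"
  unfolding right_subinvariant_def by (intro allI word_dist_mult_right_le)

lemma uniformly_discrete_word_dist: "uniformly_discrete (word_dist M)"
proof -
  have "1 \<le> (INF p \<in> {(s, t). s \<noteq> t}. word_dist M (fst p) (snd p))"
    using word_dist_ge_1 by (auto intro!: INF_greatest)
  then show ?thesis
    unfolding uniformly_discrete_def using zero_less_one by (rule order.strict_trans2[rotated])
qed

end

lemma components_L_classes_word_dist: "components_L_classes (word_dist M)"
  unfolding components_L_classes_def using word_dist_less_top_iff by blast

lemma quasi_finitely_generated_if_uniformly_proper:
  fixes d :: "'a::inverse_semigroup \<Rightarrow> 'a \<Rightarrow> ennreal"
  assumes "uniformly_proper d" and "components_L_classes d"
  shows "quasi_finitely_generated TYPE('a)"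
proof -
  obtain F1 :: "'a set" where "finite F1" and F1: "\<And>r x y. r \<ge> 0 \<Longrightarrow> x \<noteq> y \<Longrightarrow> d x y \<le> ennreal r \<Longrightarrow>
      \<exists>fs. fs \<noteq> [] \<and> length fs \<le> nat \<lceil>r\<rceil> \<and> set fs \<subseteq> F1 \<and> y = lprod fs * x"
    using assms(1) unfolding uniformly_proper_def by blast
  define M where "M = F1 \<union> isinv ` F1"
  have "isinv ` M = M"
    unfolding M_def by (auto simp: image_Un image_image)
  moreover have "finite M"
    unfolding M_def using \<open>finite F1\<close> by simp
  moreover have "quasi_generates M"
    unfolding quasi_generates_def
  proof
    fix s :: 'a
    let ?e = "isinv s * s"
    show "\<exists>ws. ws \<noteq> [] \<and> set ws \<subseteq> M \<union> idems \<and> s = lprod ws"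
    proof (cases "s = ?e")
      case True
      then have "s \<in> idems"
        using isinv_mult_self_idem[of s] by (simp add: idems_def)
      then show ?thesis
        by (intro exI[of _ "[s]"]) simp
    next
      case False
      have "d ?e s < \<infinity>"
        using assms(2) Lrel_isinv_mult_self unfolding components_L_classes_def by blast
      then have "d ?e s \<le> ennreal (enn2real (d ?e s))"
        by (simp add: ennreal_enn2real_if)
      then obtain fs where fs: "fs \<noteq> []" "set fs \<subseteq> F1" "s = lprod fs * ?e"
        using F1[OF enn2real_nonneg] False by metis
      have "s = lprod (fs @ [?e])"
        using fs lprod_append_singleton by metis
      moreover have "set (fs @ [?e]) \<subseteq> M \<union> idems"
        using fs isinv_mult_self_idem[of s] by (auto simp: M_def idems_def)
      ultimately show ?thesis
        by (intro exI[of _ "fs @ [?e]"]) simp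
    qed
  qed
  ultimately show ?thesis
    unfolding quasi_finitely_generated_iff by blast
qed

theorem proposition3p4:
  shows "quasi_finitely_generated TYPE('a::inverse_semigroup) \<longleftrightarrow>
    (\<exists>d :: 'a \<Rightarrow> 'a \<Rightarrow> ennreal. ext_metric d \<and> uniformly_proper d \<and> right_subinvariant d \<and>
        uniformly_discrete d \<and> components_L_classes d)"
proof
  assume "quasi_finitely_generated TYPE('a)"
  then obtain M :: "'a set" where "finite M" "isinv ` M = M" "quasi_generates M"
    unfolding quasi_finitely_generated_iff by blast
  then show "\<exists>d :: 'a \<Rightarrow> 'a \<Rightarrow> ennreal. ext_metric d \<and> uniformly_proper d \<and>
      right_subinvariant d \<and> uniformly_discrete d \<and> components_L_classes d"
    using ext_metric_word_dist uniformly_proper_word_dist right_subinvariant_word_dist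
      uniformly_discrete_word_dist components_L_classes_word_dist by blast
next
  assume "\<exists>d :: 'a \<Rightarrow> 'a \<Rightarrow> ennreal. ext_metric d \<and> uniformly_proper d \<and>
      right_subinvariant d \<and> uniformly_discrete d \<and> components_L_classes d"
  then show "quasi_finitely_generated TYPE('a)"
    using quasi_finitely_generated_if_uniformly_proper by blast
qed

end
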